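(* Let $n\ge 2$, $a>1$, $p,q\in\mathbb{R}$, and let $f_t(x)$, $(t,x)\in[0,T)\times[1,a]$, be a solution of $$\dot f=u''(x)\left(\frac{f''}{1+f'^2}+(n-1)\frac{xf'-f}{x^2+f^2}\right),\qquad f_t(1)=q,\ f_t(a)=p.$$ Then there exist uniform constants $A,B$ (independent of $t$) such that $$|f_t'(1)|+|f_t'(a)|\leq Ae^{Bt}\quad\text{for all }t\in[0,T).$$
   Context: Setting: $X$ is the blowup of $\mathbb{P}^n$ at a point, $\omega=i\partial\bar\partial u(\rho)$ a Calabi-symmetric K\"ahler form in the class $a[H]-[E]$ ($\rho=\log|z|^2$ on $\mathbb{C}^n\setminus\{0\}$, $u'>0,u''>0$, with $u(\log r)-\log r$ and $u(-\log r)+a\log r$ smooth up to $r=0$ with positive derivative there). In the Legendre coordinate $x=u'(\rho)\in[1,a]$, $u''$ is a smooth function of $x$ on $[1,a]$, positive on $(1,a)$, vanishing linearly at $x=1$ and $x=a$. A Calabi-symmetric form $\alpha=i\partial\bar\partial v(\rho)$ in $p[H]-q[E]$ corresponds to $f(x)=v'(\rho)$ with $f(1)=q$, $f(a)=p$; the line bundle mean curvature flow becomes the displayed equation for $f$. *)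

theory Defs
  imports "HOL-Analysis.Analysis" "HOL-Library.Extended_Real"
begin

definition flow_dom :: "ereal \<Rightarrow> real \<Rightarrow> (real \<times> real) set" where
  "flow_dom T a = {(t, x). 0 \<le> t \<and> ereal t < T \<and> 1 \<le> x \<and> x \<le> a}"

text \<open>The function w(x) = u''(x) in the Legendre coordinate x in [1,a]:
  continuously differentiable on [1,a], positive on (1,a), vanishing linearly at 1 and a.\<close>
definition legendre_weight :: "real \<Rightarrow> (real \<Rightarrow> real) \<Rightarrow> (real \<Rightarrow> real) \<Rightarrow> bool" where
  "legendre_weight a w w' \<longleftrightarrow>
     (\<forall>x\<in>{1..a}. (w has_real_derivative w' x) (at x within {1..a})) \<and>
     continuous_on {1..a} w' \<and>
     (\<forall>x\<in>{1<..<a}. w x > 0) \<and>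
     w 1 = 0 \<and> w a = 0 \<and> w' 1 \<noteq> 0 \<and> w' a \<noteq> 0"

definition lbmcf_solution ::
  "nat \<Rightarrow> real \<Rightarrow> (real \<Rightarrow> real) \<Rightarrow> real \<Rightarrow> real \<Rightarrow> ereal \<Rightarrow>
   (real \<Rightarrow> real \<Rightarrow> real) \<Rightarrow> (real \<Rightarrow> real \<Rightarrow> real) \<Rightarrow> (real \<Rightarrow> real \<Rightarrow> real) \<Rightarrow>
   (real \<Rightarrow> real \<Rightarrow> real) \<Rightarrow> bool" where
  "lbmcf_solution n a w p q T f fx fxx ft \<longleftrightarrow>
     (\<forall>(t, x)\<in>flow_dom T a.
        ((\<lambda>y. f t y) has_real_derivative fx t x) (at x within {1..a}) \<and>
        ((\<lambda>y. fx t y) has_real_derivative fxx t x) (at x within {1..a}) \<and>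
        ((\<lambda>s. f s x) has_real_derivative ft t x) (at t within {s. 0 \<le> s \<and> ereal s < T}) \<and>
        ft t x = w x * (fxx t x / (1 + (fx t x)\<^sup>2)
                        + (real n - 1) * (x * fx t x - f t x) / (x\<^sup>2 + (f t x)\<^sup>2))) \<and>
     continuous_on (flow_dom T a) (\<lambda>(t, x). f t x) \<and>
     continuous_on (flow_dom T a) (\<lambda>(t, x). fx t x) \<and>
     continuous_on (flow_dom T a) (\<lambda>(t, x). fxx t x) \<and>
     continuous_on (flow_dom T a) (\<lambda>(t, x). ft t x) \<and>
     (\<forall>t. 0 \<le> t \<and> ereal t < T \<longrightarrow> f t 1 = q \<and> f t a = p)"

end

theory Submission
  imports Defs
begin

(* Barrier argument.  Since u'' vanishes linearly at both ends, u'' <= C (x - 1) and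
   u'' <= C (a - x).  With B = 2 C (n - 1) + 1 and K large in terms of the initial gradient
   and |p - q|, the functions q + K e^(Bt) (x - 1) and p + K e^(Bt) (a - x) are upper
   barriers for f: at a first interior point where f touches one of them, f' equals the
   barrier slope, f'' <= 0, and since (x f' - f) / (x^2 + f^2) <= |f'| + 1 the equation
   forces f_t below the speed of the barrier.  The equation is odd in f, so lower barriers
   come from applying this to -f.  Squeezed between two barriers that vanish at an
   endpoint, f has slope at most K e^(Bt) there. *)

lemma has_real_derivative_abs_le:
  fixes f :: "real \<Rightarrow> real"
  assumes "(f has_real_derivative D) (at x within S)" and "at x within S \<noteq> bot"
    and "\<And>y. y \<in> S \<Longrightarrow> \<bar>f y - f x\<bar> \<le> M * \<bar>y - x\<bar>"
  shows "\<bar>D\<bar> \<le> M"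
proof (rule tendsto_upperbound)
  show "((\<lambda>y. \<bar>(f y - f x) / (y - x)\<bar>) \<longlongrightarrow> \<bar>D\<bar>) (at x within S)"
    using assms(1) by (intro tendsto_rabs) (simp add: has_field_derivative_iff)
  show "\<forall>\<^sub>F y in at x within S. \<bar>(f y - f x) / (y - x)\<bar> \<le> M"
    using assms(3) by (auto simp: eventually_at_filter abs_div divide_le_eq)
qed (use assms(2) in auto)

lemma has_real_derivative_nonneg_at_right_end_max:
  fixes f :: "real \<Rightarrow> real"
  assumes "(f has_real_derivative D) (at b within {a..b})" and "a < b"
    and "\<And>y. y \<in> {a..b} \<Longrightarrow> f y \<le> f b"
  shows "0 \<le> D"
proof (rule tendsto_lowerbound)
  show "((\<lambda>y. (f y - f b) / (y - b)) \<longlongrightarrow> D) (at_left b)"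
    using assms(1,2) by (simp add: has_field_derivative_iff at_within_Icc_at_left)
  show "\<forall>\<^sub>F y in at_left b. 0 \<le> (f y - f b) / (y - b)"
    using eventually_at_left_real[OF assms(2)]
    by eventually_elim (use assms(3) in \<open>auto intro!: divide_nonpos_neg\<close>)
qed simp

lemma DERIV_second_nonpos_at_left_end_max:
  fixes f f' :: "real \<Rightarrow> real"
  assumes f': "\<And>y. y \<in> {x..<b} \<Longrightarrow> (f has_real_derivative f' y) (at y)"
    and f'': "(f' has_real_derivative f'') (at x)" and "f' x = 0" and "x < b"
    and max: "\<And>y. y \<in> {x..b} \<Longrightarrow> f y \<le> f x"
  shows "f'' \<le> 0"
proof (rule ccontr)
  assume "\<not> f'' \<le> 0"
  then obtain \<delta> where "\<delta> > 0" and pos: "\<And>h. 0 < h \<Longrightarrow> h < \<delta> \<Longrightarrow> 0 < f' (x + h)"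
    using DERIV_pos_inc_right[OF f''] \<open>f' x = 0\<close> by force
  define h where "h = min \<delta> (b - x) / 2"
  have h: "0 < h" "h < \<delta>" "x + h < b"
    using \<open>\<delta> > 0\<close> \<open>x < b\<close> by (auto simp: h_def min_def field_simps)
  have "f x < f (x + h)"
  proof (rule DERIV_pos_imp_increasing_open[of x "x + h" f])
    show "\<exists>l. (f has_real_derivative l) (at y) \<and> 0 < l" if "x < y" "y < x + h" for y
      using f'[of y] pos[of "y - x"] that h by auto
    show "continuous_on {x..x + h} f"
      using h by (intro continuous_at_imp_continuous_on) (auto intro!: DERIV_isCont f')
  qed (use h in auto)
  with max[of "x + h"] h show False by auto
qed

lemma DERIV_tests_at_interior_max:
  fixes g g' :: "real \<Rightarrow> real"
  assumes g': "\<And>z. z \<in> {lo<..<hi} \<Longrightarrow> (g has_real_derivative g' z) (at z)"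
    and g'': "(g' has_real_derivative g'') (at y)" and "lo < y" and "y < hi"
    and max: "\<And>z. z \<in> {lo..hi} \<Longrightarrow> g z \<le> g y"
  shows "g' y = 0" and "g'' \<le> 0"
proof -
  show "g' y = 0"
  proof (rule DERIV_local_max[OF g'])
    show "\<forall>z. \<bar>y - z\<bar> < min (y - lo) (hi - y) \<longrightarrow> g z \<le> g y"
      using max by (auto simp: abs_less_iff)
  qed (use \<open>lo < y\<close> \<open>y < hi\<close> in auto)
  then show "g'' \<le> 0"
    by (intro DERIV_second_nonpos_at_left_end_max[where f = g and f' = g', OF _ g'' _ \<open>y < hi\<close>])
      (use g' max \<open>lo < y\<close> in auto)
qed

lemma continuous_derivative_imp_lipschitz:
  fixes g g' :: "real \<Rightarrow> real"
  assumes "\<And>x. x \<in> {lo..hi} \<Longrightarrow> (g has_real_derivative g' x) (at x within {lo..hi})"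
    and "continuous_on {lo..hi} g'"
  obtains M where "0 \<le> M"
    and "\<And>x y. x \<in> {lo..hi} \<Longrightarrow> y \<in> {lo..hi} \<Longrightarrow> \<bar>g x - g y\<bar> \<le> M * \<bar>x - y\<bar>"
proof -
  obtain M where M: "\<forall>x \<in> {lo..hi}. \<bar>g' x\<bar> \<le> M"
    using compact_imp_bounded[OF compact_continuous_image[OF assms(2) compact_Icc]]
    by (auto simp: bounded_iff)
  show thesis
  proof (rule that[of "max M 0"])
    show "\<bar>g x - g y\<bar> \<le> max M 0 * \<bar>x - y\<bar>" if "x \<in> {lo..hi}" "y \<in> {lo..hi}" for x y
      using field_differentiable_bound[OF convex_real_interval(5) assms(1), of "max M 0" x y] M that
      by force
  qed simp
qed

lemma parabolic_maximum_principle: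
  fixes h :: "real \<times> real \<Rightarrow> real"
  assumes cont: "continuous_on ({0..t} \<times> {lo..hi}) h"
    and lateral: "\<And>s. s \<in> {0..t} \<Longrightarrow> h (s, lo) \<le> 0 \<and> h (s, hi) \<le> 0"
    and initial: "\<And>y. y \<in> {lo..hi} \<Longrightarrow> h (0, y) \<le> 0"
    and no_interior_max: "\<And>s y. 0 < s \<Longrightarrow> s \<le> t \<Longrightarrow> lo < y \<Longrightarrow> y < hi \<Longrightarrow>
      \<forall>z \<in> {0..t} \<times> {lo..hi}. h z \<le> h (s, y) \<Longrightarrow> False"
    and z: "z \<in> {0..t} \<times> {lo..hi}"
  shows "h z \<le> 0"
proof -
  obtain s y where sy: "(s, y) \<in> {0..t} \<times> {lo..hi}"
    and max: "\<forall>z \<in> {0..t} \<times> {lo..hi}. h z \<le> h (s, y)"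
    using continuous_attains_sup[OF compact_Times[OF compact_Icc compact_Icc] _ cont] z by force
  have "h (s, y) \<le> 0"
  proof (cases "s = 0 \<or> y = lo \<or> y = hi")
    case True
    with sy lateral initial show ?thesis by auto
  next
    case False
    with sy no_interior_max[OF _ _ _ _ max] show ?thesis by auto
  qed
  with max z show ?thesis by (meson order_trans)
qed

lemma abs_le_one_plus_square:
  fixes v :: real
  shows "\<bar>v\<bar> \<le> 1 + v\<^sup>2"
proof (cases "\<bar>v\<bar> \<le> 1")
  case False
  then have "\<bar>v\<bar> * 1 \<le> \<bar>v\<bar> * \<bar>v\<bar>"
    by (intro mult_left_mono) auto
  then show ?thesis
    by (simp add: power2_eq_square abs_mult_self_eq)
qed (simp add: add_increasing2)

lemma div_sum_squares_le:
  fixes x u v :: real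
  assumes "1 \<le> x"
  shows "(x * u - v) / (x\<^sup>2 + v\<^sup>2) \<le> \<bar>u\<bar> + 1"
proof -
  have "x \<le> x\<^sup>2"
    using mult_right_mono[OF assms, of x] assms by (simp add: power2_eq_square)
  have "x * u \<le> \<bar>u\<bar> * x\<^sup>2"
  proof -
    have "x * u \<le> x * \<bar>u\<bar>"
      using assms by (intro mult_left_mono) auto
    also have "\<dots> \<le> \<bar>u\<bar> * x\<^sup>2"
      using mult_right_mono[OF \<open>x \<le> x\<^sup>2\<close>, of "\<bar>u\<bar>"] by (simp add: mult.commute)
    finally show ?thesis .
  qed
  moreover have "- v \<le> x\<^sup>2 + v\<^sup>2"
    using abs_le_one_plus_square[of v] \<open>x \<le> x\<^sup>2\<close> assms by linarith
  moreover have "0 \<le> \<bar>u\<bar> * v\<^sup>2"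
    by simp
  moreover have "(\<bar>u\<bar> + 1) * (x\<^sup>2 + v\<^sup>2) = \<bar>u\<bar> * x\<^sup>2 + \<bar>u\<bar> * v\<^sup>2 + x\<^sup>2 + v\<^sup>2"
    by (simp add: algebra_simps)
  ultimately have "x * u - v \<le> (\<bar>u\<bar> + 1) * (x\<^sup>2 + v\<^sup>2)"
    by linarith
  moreover have "0 < x\<^sup>2 + v\<^sup>2"
    using \<open>x \<le> x\<^sup>2\<close> assms by (simp add: add_pos_nonneg)
  ultimately show ?thesis
    by (simp add: divide_le_eq)
qed

lemma lbmcf_rhs_lt_barrier_speed:
  fixes n :: nat and w C d P u uxx v x :: real
  assumes "1 \<le> n" and "0 < w" and "w \<le> C * d" and "0 \<le> C"
    and "1 \<le> P" and "\<bar>u\<bar> \<le> P" and "uxx \<le> 0" and "1 \<le> x"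
  shows "w * (uxx / (1 + u\<^sup>2) + (real n - 1) * (x * u - v) / (x\<^sup>2 + v\<^sup>2))
    < (2 * C * (real n - 1) + 1) * P * d"
proof -
  have "0 < C * d"
    using assms(2,3) by linarith
  then have "0 < d"
    using assms(4) by (simp add: zero_less_mult_iff)
  have "0 \<le> real n - 1"
    using assms(1) by simp
  have "uxx / (1 + u\<^sup>2) \<le> 0"
    using assms(7) by (simp add: divide_nonpos_pos add_pos_nonneg)
  moreover have "(real n - 1) * (x * u - v) / (x\<^sup>2 + v\<^sup>2) \<le> (real n - 1) * (2 * P)"
  proof -
    have "(x * u - v) / (x\<^sup>2 + v\<^sup>2) \<le> 2 * P"
      using div_sum_squares_le[OF assms(8), of u v] assms(5,6) by linarith
    then show ?thesis
      using \<open>0 \<le> real n - 1\<close> by (simp add: mult_left_mono flip: times_divide_eq_right)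
  qed
  ultimately have "w * (uxx / (1 + u\<^sup>2) + (real n - 1) * (x * u - v) / (x\<^sup>2 + v\<^sup>2))
      \<le> w * ((real n - 1) * (2 * P))"
    using assms(2) by (intro mult_left_mono) auto
  also have "\<dots> \<le> C * d * ((real n - 1) * (2 * P))"
    using assms(3,5) \<open>0 \<le> real n - 1\<close> by (intro mult_right_mono) auto
  also have "\<dots> < (2 * C * (real n - 1) + 1) * P * d"
    using \<open>0 < d\<close> assms(5) by (simp add: algebra_simps)
  finally show ?thesis .
qed

lemma lbmcf_solutionD:
  assumes "lbmcf_solution n a w p q T f fx fxx ft" and "0 \<le> t" and "ereal t < T"
    and "x \<in> {1..a}"
  shows "(f t has_real_derivative fx t x) (at x within {1..a})"
    and "(fx t has_real_derivative fxx t x) (at x within {1..a})"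
    and "((\<lambda>s. f s x) has_real_derivative ft t x) (at t within {s. 0 \<le> s \<and> ereal s < T})"
    and "ft t x = w x * (fxx t x / (1 + (fx t x)\<^sup>2)
                         + (real n - 1) * (x * fx t x - f t x) / (x\<^sup>2 + (f t x)\<^sup>2))"
  using assms unfolding lbmcf_solution_def flow_dom_def by fastforce+

lemma lbmcf_solution_boundary:
  assumes "lbmcf_solution n a w p q T f fx fxx ft" and "0 \<le> t" and "ereal t < T"
  shows "f t 1 = q" and "f t a = p"
  using assms unfolding lbmcf_solution_def by auto

lemma lbmcf_solution_uminus:
  assumes "lbmcf_solution n a w p q T f fx fxx ft"
  shows "lbmcf_solution n a w (- p) (- q) T (\<lambda>t x. - f t x) (\<lambda>t x. - fx t x)
    (\<lambda>t x. - fxx t x) (\<lambda>t x. - ft t x)"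
proof -
  have neg: "continuous_on (flow_dom T a) (\<lambda>(t, x). - g t x)"
    if "continuous_on (flow_dom T a) (\<lambda>(t, x). g t x)" for g :: "real \<Rightarrow> real \<Rightarrow> real"
    using continuous_on_minus[OF that] by (simp add: case_prod_beta')
  have odd: "- r = W * (- A / (1 + (- u)\<^sup>2) + m * (x * - u - - v) / (x\<^sup>2 + (- v)\<^sup>2))"
    if "r = W * (A / (1 + u\<^sup>2) + m * (x * u - v) / (x\<^sup>2 + v\<^sup>2))" for r W A u m x v :: real
    using that by (simp add: diff_divide_distrib algebra_simps)
  show ?thesis
    using assms unfolding lbmcf_solution_def
    by (fastforce intro!: DERIV_minus neg odd)
qed

lemma lbmcf_no_interior_max_above_barrier:
  fixes n :: nat and a p q C K e s y :: real and T :: ereal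
    and w d :: "real \<Rightarrow> real" and f fx fxx ft :: "real \<Rightarrow> real \<Rightarrow> real"
  defines "B \<equiv> 2 * C * (real n - 1) + 1"
  assumes sol: "lbmcf_solution n a w p q T f fx fxx ft"
    and "1 \<le> n" and "0 \<le> C" and "1 \<le> K" and "0 < w y" and "w y \<le> C * d y"
    and d_slope: "\<And>z. (d has_real_derivative e) (at z)" and "\<bar>e\<bar> \<le> 1"
    and s: "0 < s" "ereal s < T" and y: "1 < y" "y < a"
    and max: "\<And>r z. r \<in> {0..s} \<Longrightarrow> z \<in> {1..a} \<Longrightarrow>
      f r z - K * exp (B * r) * d z \<le> f s y - K * exp (B * s) * d y"
  shows False
proof -
  define E where "E = exp (B * s)"
  have s_time: "0 \<le> s" "ereal s < T" and "y \<in> {1..a}"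
    using s y by auto
  have space_deriv: "(f s has_real_derivative fx s z) (at z)"
    "(fx s has_real_derivative fxx s z) (at z)" if "z \<in> {1<..<a}" for z
    using lbmcf_solutionD(1,2)[OF sol s_time, of z] that by (simp_all add: at_within_Icc_at)
  have gap_deriv: "((\<lambda>z. f s z - K * E * d z) has_real_derivative fx s z - K * E * e) (at z)"
    if "z \<in> {1<..<a}" for z
    using space_deriv(1)[OF that] d_slope by (auto intro!: derivative_eq_intros)
  have gap_deriv2: "((\<lambda>z. fx s z - K * E * e) has_real_derivative fxx s y) (at y)"
    using space_deriv(2)[of y] y by (auto intro!: derivative_eq_intros)
  have gap_max: "f s z - K * E * d z \<le> f s y - K * E * d y" if "z \<in> {1..a}" for z
    using max[OF _ that, of s] s by (simp add: E_def)
  note tests = DERIV_tests_at_interior_max[OF gap_deriv gap_deriv2 y gap_max]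
  have slope: "fx s y = K * E * e" and concave: "fxx s y \<le> 0"
    using tests by simp_all
  have speed: "K * E * B * d y \<le> ft s y"
  proof -
    have "((\<lambda>r. f r y) has_real_derivative ft s y) (at s within {0..s})"
      by (rule DERIV_subset[OF lbmcf_solutionD(3)[OF sol s_time \<open>y \<in> {1..a}\<close>]])
        (use s_time in \<open>auto intro: le_less_trans[of "ereal _" "ereal s"]\<close>)
    then have "((\<lambda>r. f r y - K * exp (B * r) * d y) has_real_derivative
        ft s y - K * (E * B) * d y) (at s within {0..s})"
      unfolding E_def by (auto intro!: derivative_eq_intros)
    then have "0 \<le> ft s y - K * (E * B) * d y"
      using s max[OF _ \<open>y \<in> {1..a}\<close>] by (intro has_real_derivative_nonneg_at_right_end_max) auto
    then show ?thesis
      by (simp add: algebra_simps)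
  qed
  have "1 \<le> E"
    using \<open>0 \<le> C\<close> \<open>1 \<le> n\<close> s by (simp add: E_def B_def)
  then have "1 \<le> K * E"
    using mult_mono[OF \<open>1 \<le> K\<close>] \<open>1 \<le> K\<close> by force
  have "\<bar>fx s y\<bar> = K * E * \<bar>e\<bar>"
    unfolding slope abs_mult[of "K * E"] using \<open>1 \<le> K * E\<close> by simp
  also have "\<dots> \<le> K * E"
    using \<open>\<bar>e\<bar> \<le> 1\<close> \<open>1 \<le> K * E\<close> by (simp add: mult_left_le)
  finally have "ft s y < B * (K * E) * d y"
    unfolding lbmcf_solutionD(4)[OF sol s_time \<open>y \<in> {1..a}\<close>] B_def
    using \<open>0 < w y\<close> \<open>w y \<le> C * d y\<close> y \<open>1 \<le> n\<close> \<open>0 \<le> C\<close> \<open>1 \<le> K * E\<close> concave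
    by (intro lbmcf_rhs_lt_barrier_speed) auto
  with speed show False
    by (simp add: algebra_simps)
qed

lemma lbmcf_upper_barrier:
  fixes n :: nat and a p q c C K e t x :: real and T :: ereal
    and w d :: "real \<Rightarrow> real" and f fx fxx ft :: "real \<Rightarrow> real \<Rightarrow> real"
  assumes sol: "lbmcf_solution n a w p q T f fx fxx ft"
    and "1 \<le> n" and "0 \<le> C" and "1 \<le> K"
    and w: "\<And>y. y \<in> {1<..<a} \<Longrightarrow> 0 < w y \<and> w y \<le> C * d y"
    and d_nonneg: "\<And>y. y \<in> {1..a} \<Longrightarrow> 0 \<le> d y"
    and d_slope: "\<And>y. (d has_real_derivative e) (at y)" and "\<bar>e\<bar> \<le> 1"
    and left: "q \<le> c + K * d 1" and right: "p \<le> c + K * d a"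
    and initial: "\<And>y. y \<in> {1..a} \<Longrightarrow> f 0 y \<le> c + K * d y"
    and t: "0 \<le> t" "ereal t < T" and x: "x \<in> {1..a}"
  shows "f t x \<le> c + K * exp ((2 * C * (real n - 1) + 1) * t) * d x"
proof -
  define B where "B = 2 * C * (real n - 1) + 1"
  define \<phi> where "\<phi> z = f (fst z) (snd z) - (c + K * exp (B * fst z) * d (snd z))" for z
  have ends: "1 \<in> {1..a}" "a \<in> {1..a}"
    using x by auto
  have time: "0 \<le> s" "ereal s < T" if "s \<in> {0..t}" for s
    using that t by (auto intro: le_less_trans[of "ereal s" "ereal t"])
  have "\<phi> (t, x) \<le> 0"
  proof (rule parabolic_maximum_principle)
    have "{0..t} \<times> {1..a} \<subseteq> flow_dom T a"
      using time by (auto simp: flow_dom_def)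
    then have "continuous_on ({0..t} \<times> {1..a}) (\<lambda>z. f (fst z) (snd z))"
      using continuous_on_subset sol by (fastforce simp: lbmcf_solution_def case_prod_beta')
    moreover have "continuous_on UNIV d"
      using d_slope by (intro continuous_at_imp_continuous_on) (auto intro: DERIV_isCont)
    then have "continuous_on ({0..t} \<times> {1..a}) (\<lambda>z. d (snd z))"
      by (rule continuous_on_compose2[OF _ continuous_on_snd[OF continuous_on_id]]) auto
    ultimately show "continuous_on ({0..t} \<times> {1..a}) \<phi>"
      unfolding \<phi>_def by (intro continuous_intros)
  next
    fix s assume "s \<in> {0..t}"
    have "1 \<le> exp (B * s)"
      using \<open>s \<in> {0..t}\<close> \<open>0 \<le> C\<close> \<open>1 \<le> n\<close> by (simp add: B_def)
    have grow: "K * d y \<le> K * exp (B * s) * d y" if "y \<in> {1..a}" for y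
      using mult_right_mono[OF \<open>1 \<le> exp (B * s)\<close> d_nonneg[OF that]] \<open>1 \<le> K\<close>
      by (simp add: mult.assoc mult_left_mono)
    then show "\<phi> (s, 1) \<le> 0 \<and> \<phi> (s, a) \<le> 0"
      using lbmcf_solution_boundary[OF sol time[OF \<open>s \<in> {0..t}\<close>]] left right
        grow[OF ends(1)] grow[OF ends(2)]
      by (simp add: \<phi>_def)
  next
    show "\<phi> (0, y) \<le> 0" if "y \<in> {1..a}" for y
      using initial[OF that] by (simp add: \<phi>_def)
  next
    show "(t, x) \<in> {0..t} \<times> {1..a}"
      using t x by simp
  next
    fix s y
    assume "0 < s" "s \<le> t" "1 < y" "y < a" and max: "\<forall>z \<in> {0..t} \<times> {1..a}. \<phi> z \<le> \<phi> (s, y)"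
    show False
    proof (rule lbmcf_no_interior_max_above_barrier[OF sol \<open>1 \<le> n\<close> \<open>0 \<le> C\<close> \<open>1 \<le> K\<close> _ _
          d_slope \<open>\<bar>e\<bar> \<le> 1\<close> \<open>0 < s\<close> time(2) \<open>1 < y\<close> \<open>y < a\<close>])
      show "0 < w y" "w y \<le> C * d y"
        using w \<open>1 < y\<close> \<open>y < a\<close> by auto
      show "f r z - K * exp ((2 * C * (real n - 1) + 1) * r) * d z
          \<le> f s y - K * exp ((2 * C * (real n - 1) + 1) * s) * d y"
        if "r \<in> {0..s}" "z \<in> {1..a}" for r z
        using max that \<open>s \<le> t\<close> by (auto simp: \<phi>_def B_def)
    qed (use \<open>0 < s\<close> \<open>s \<le> t\<close> in auto)
  qed
  then show ?thesis
    by (simp add: \<phi>_def B_def)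
qed

lemma lbmcf_two_sided_barrier:
  fixes n :: nat and a p q c C K e t x :: real and T :: ereal
    and w d :: "real \<Rightarrow> real" and f fx fxx ft :: "real \<Rightarrow> real \<Rightarrow> real"
  assumes sol: "lbmcf_solution n a w p q T f fx fxx ft"
    and "1 \<le> n" and "0 \<le> C" and "1 \<le> K"
    and w: "\<And>y. y \<in> {1<..<a} \<Longrightarrow> 0 < w y \<and> w y \<le> C * d y"
    and d_nonneg: "\<And>y. y \<in> {1..a} \<Longrightarrow> 0 \<le> d y"
    and d_slope: "\<And>y. (d has_real_derivative e) (at y)" and "\<bar>e\<bar> \<le> 1"
    and left: "\<bar>q - c\<bar> \<le> K * d 1" and right: "\<bar>p - c\<bar> \<le> K * d a"
    and initial: "\<And>y. y \<in> {1..a} \<Longrightarrow> \<bar>f 0 y - c\<bar> \<le> K * d y"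
    and t: "0 \<le> t" "ereal t < T" and x: "x \<in> {1..a}"
  shows "\<bar>f t x - c\<bar> \<le> K * exp ((2 * C * (real n - 1) + 1) * t) * d x"
proof -
  have "q \<le> c + K * d 1" "- q \<le> - c + K * d 1" "p \<le> c + K * d a" "- p \<le> - c + K * d a"
    using left right by (simp_all add: abs_le_iff)
  moreover have "f 0 y \<le> c + K * d y" "- f 0 y \<le> - c + K * d y" if "y \<in> {1..a}" for y
    using initial[OF that] by (simp_all add: abs_le_iff)
  ultimately have "f t x \<le> c + K * exp ((2 * C * (real n - 1) + 1) * t) * d x"
    and "- f t x \<le> - c + K * exp ((2 * C * (real n - 1) + 1) * t) * d x"
    using lbmcf_upper_barrier[OF sol \<open>1 \<le> n\<close> \<open>0 \<le> C\<close> \<open>1 \<le> K\<close> w d_nonneg d_slope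
        \<open>\<bar>e\<bar> \<le> 1\<close> _ _ _ t x]
      lbmcf_upper_barrier[OF lbmcf_solution_uminus[OF sol] \<open>1 \<le> n\<close> \<open>0 \<le> C\<close> \<open>1 \<le> K\<close>
        w d_nonneg d_slope \<open>\<bar>e\<bar> \<le> 1\<close> _ _ _ t x]
    by blast+
  then show ?thesis
    by (simp add: abs_le_iff)
qed

lemma legendre_weight_le_linear:
  assumes "legendre_weight a w w'"
  obtains C where "0 \<le> C"
    and "\<And>y. y \<in> {1<..<a} \<Longrightarrow> 0 < w y \<and> w y \<le> C * (y - 1) \<and> w y \<le> C * (a - y)"
proof -
  have der: "\<And>x. x \<in> {1..a} \<Longrightarrow> (w has_real_derivative w' x) (at x within {1..a})"
    and cont: "continuous_on {1..a} w'"
    and pos: "\<And>y. y \<in> {1<..<a} \<Longrightarrow> 0 < w y" and "w 1 = 0" and "w a = 0"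
    using assms unfolding legendre_weight_def by auto
  obtain C where "0 \<le> C"
    and lip: "\<And>x y. x \<in> {1..a} \<Longrightarrow> y \<in> {1..a} \<Longrightarrow> \<bar>w x - w y\<bar> \<le> C * \<bar>x - y\<bar>"
    using continuous_derivative_imp_lipschitz[OF der cont] by blast
  show thesis
  proof (rule that[OF \<open>0 \<le> C\<close>])
    fix y assume "y \<in> {1<..<a}"
    then show "0 < w y \<and> w y \<le> C * (y - 1) \<and> w y \<le> C * (a - y)"
      using pos lip[of y 1] lip[of y a] \<open>w 1 = 0\<close> \<open>w a = 0\<close> by auto
  qed
qed

lemma lbmcf_solution_initial_lipschitz:
  assumes sol: "lbmcf_solution n a w p q T f fx fxx ft" and "0 < T"
  obtains M where "0 \<le> M"
    and "\<And>x y. x \<in> {1..a} \<Longrightarrow> y \<in> {1..a} \<Longrightarrow> \<bar>f 0 x - f 0 y\<bar> \<le> M * \<bar>x - y\<bar>"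
proof (rule continuous_derivative_imp_lipschitz)
  have T: "0 \<le> (0::real)" "ereal 0 < T"
    using \<open>0 < T\<close> by (auto simp: zero_ereal_def)
  show "(f 0 has_real_derivative fx 0 x) (at x within {1..a})" if "x \<in> {1..a}" for x
    using lbmcf_solutionD(1)[OF sol T that] .
  have "continuous_on (flow_dom T a) (\<lambda>(t, x). fx t x)"
    using sol by (simp add: lbmcf_solution_def)
  then have "continuous_on {1..a} (\<lambda>x. (\<lambda>(t, x). fx t x) (0, x))"
    by (rule continuous_on_compose2) (auto intro!: continuous_intros simp: flow_dom_def T)
  then show "continuous_on {1..a} (fx 0)"
    by simp
qed (rule that)

lemma lbmcf_initial_barrier_constant:
  assumes sol: "lbmcf_solution n a w p q T f fx fxx ft" and "1 < a" and "0 < T"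
  obtains K where "1 \<le> K" and "\<bar>p - q\<bar> \<le> K * (a - 1)"
    and "\<And>y. y \<in> {1..a} \<Longrightarrow> \<bar>f 0 y - q\<bar> \<le> K * (y - 1) \<and> \<bar>f 0 y - p\<bar> \<le> K * (a - y)"
proof -
  obtain M where "0 \<le> M"
    and lip: "\<And>x y. x \<in> {1..a} \<Longrightarrow> y \<in> {1..a} \<Longrightarrow> \<bar>f 0 x - f 0 y\<bar> \<le> M * \<bar>x - y\<bar>"
    using lbmcf_solution_initial_lipschitz[OF sol \<open>0 < T\<close>] by blast
  define K where "K = 1 + M + \<bar>p - q\<bar> / (a - 1)"
  have "1 \<le> K" and "M \<le> K"
    using \<open>0 \<le> M\<close> \<open>1 < a\<close> by (simp_all add: K_def)
  have "K * (a - 1) = (1 + M) * (a - 1) + \<bar>p - q\<bar>"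
    using \<open>1 < a\<close> by (simp add: K_def distrib_right)
  then have "\<bar>p - q\<bar> \<le> K * (a - 1)"
    using \<open>0 \<le> M\<close> \<open>1 < a\<close> by simp
  have "f 0 1 = q" and "f 0 a = p"
    using lbmcf_solution_boundary[OF sol, of 0] \<open>0 < T\<close> by (simp_all add: zero_ereal_def)
  have "\<bar>f 0 y - q\<bar> \<le> K * (y - 1) \<and> \<bar>f 0 y - p\<bar> \<le> K * (a - y)" if "y \<in> {1..a}" for y
  proof -
    have "M * (y - 1) \<le> K * (y - 1)" and "M * (a - y) \<le> K * (a - y)"
      using that \<open>M \<le> K\<close> by (simp_all add: mult_right_mono)
    moreover have "\<bar>f 0 y - f 0 1\<bar> \<le> M * (y - 1)" and "\<bar>f 0 y - f 0 a\<bar> \<le> M * (a - y)"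
      using lip[OF that, of 1] lip[OF that, of a] that \<open>1 < a\<close> by auto
    ultimately show ?thesis
      unfolding \<open>f 0 1 = q\<close>[symmetric] \<open>f 0 a = p\<close>[symmetric] by linarith
  qed
  with \<open>1 \<le> K\<close> \<open>\<bar>p - q\<bar> \<le> K * (a - 1)\<close> show thesis
    by (rule that)
qed

lemma lbmcf_endpoint_slopes_le:
  fixes n :: nat and a p q C K t :: real and T :: ereal
    and w :: "real \<Rightarrow> real" and f fx fxx ft :: "real \<Rightarrow> real \<Rightarrow> real"
  assumes sol: "lbmcf_solution n a w p q T f fx fxx ft"
    and "1 \<le> n" and "1 < a" and "0 \<le> C" and "1 \<le> K"
    and w: "\<And>y. y \<in> {1<..<a} \<Longrightarrow> 0 < w y \<and> w y \<le> C * (y - 1) \<and> w y \<le> C * (a - y)"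
    and "\<bar>p - q\<bar> \<le> K * (a - 1)"
    and initial: "\<And>y. y \<in> {1..a} \<Longrightarrow> \<bar>f 0 y - q\<bar> \<le> K * (y - 1) \<and> \<bar>f 0 y - p\<bar> \<le> K * (a - y)"
    and t: "0 \<le> t" "ereal t < T"
  shows "\<bar>fx t 1\<bar> \<le> K * exp ((2 * C * (real n - 1) + 1) * t)"
    and "\<bar>fx t a\<bar> \<le> K * exp ((2 * C * (real n - 1) + 1) * t)"
proof -
  define E where "E = K * exp ((2 * C * (real n - 1) + 1) * t)"
  have ends: "1 \<in> {1..a}" "a \<in> {1..a}"
    using \<open>1 < a\<close> by auto
  have slope_left: "\<And>y. ((\<lambda>y. y - 1) has_real_derivative 1) (at y)"
    and slope_right: "\<And>y. ((\<lambda>y. a - y) has_real_derivative - 1) (at y)"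
    by (auto intro!: derivative_eq_intros)
  have w_left: "\<And>y. y \<in> {1<..<a} \<Longrightarrow> 0 < w y \<and> w y \<le> C * (y - 1)"
    and w_right: "\<And>y. y \<in> {1<..<a} \<Longrightarrow> 0 < w y \<and> w y \<le> C * (a - y)"
    using w by blast+
  have init_left: "\<And>y. y \<in> {1..a} \<Longrightarrow> \<bar>f 0 y - q\<bar> \<le> K * (y - 1)"
    and init_right: "\<And>y. y \<in> {1..a} \<Longrightarrow> \<bar>f 0 y - p\<bar> \<le> K * (a - y)"
    using initial by blast+
  have nonneg_left: "\<And>y. y \<in> {1..a} \<Longrightarrow> 0 \<le> y - 1"
    and nonneg_right: "\<And>y. y \<in> {1..a} \<Longrightarrow> 0 \<le> a - y"
    by simp_all
  have bounds: "\<bar>q - q\<bar> \<le> K * (1 - 1)" "\<bar>p - q\<bar> \<le> K * (a - 1)"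
    "\<bar>q - p\<bar> \<le> K * (a - 1)" "\<bar>p - p\<bar> \<le> K * (a - a)"
    "\<bar>1\<bar> \<le> (1::real)" "\<bar>- 1\<bar> \<le> (1::real)"
    using \<open>\<bar>p - q\<bar> \<le> K * (a - 1)\<close> abs_minus_commute[of q p] by simp_all
  note barrier = lbmcf_two_sided_barrier[OF sol \<open>1 \<le> n\<close> \<open>0 \<le> C\<close> \<open>1 \<le> K\<close>]
  have left_barrier: "\<bar>f t y - q\<bar> \<le> E * (y - 1)" if "y \<in> {1..a}" for y
    unfolding E_def by (rule barrier[OF w_left nonneg_left slope_left bounds(5,1,2) init_left t that])
  have right_barrier: "\<bar>f t y - p\<bar> \<le> E * (a - y)" if "y \<in> {1..a}" for y
    unfolding E_def by (rule barrier[OF w_right nonneg_right slope_right bounds(6,3,4) init_right t that])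
  show "\<bar>fx t 1\<bar> \<le> E"
  proof (rule has_real_derivative_abs_le[OF lbmcf_solutionD(1)[OF sol t ends(1)]])
    show "at 1 within {1..a} \<noteq> bot"
      using \<open>1 < a\<close> by (simp add: at_within_Icc_at_right)
    show "\<bar>f t y - f t 1\<bar> \<le> E * \<bar>y - 1\<bar>" if "y \<in> {1..a}" for y
      using left_barrier[OF that] lbmcf_solution_boundary(1)[OF sol t] that by simp
  qed
  show "\<bar>fx t a\<bar> \<le> E"
  proof (rule has_real_derivative_abs_le[OF lbmcf_solutionD(1)[OF sol t ends(2)]])
    show "at a within {1..a} \<noteq> bot"
      using \<open>1 < a\<close> by (simp add: at_within_Icc_at_left)
    show "\<bar>f t y - f t a\<bar> \<le> E * \<bar>y - a\<bar>" if "y \<in> {1..a}" for y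
      using right_barrier[OF that] lbmcf_solution_boundary(2)[OF sol t] that by simp
  qed
qed

theorem proposition4p1:
  fixes n :: nat and a p q :: real and T :: ereal
    and w w' :: "real \<Rightarrow> real" and f fx fxx ft :: "real \<Rightarrow> real \<Rightarrow> real"
  assumes "n \<ge> 2" and "a > 1" and "T > 0"
    and "legendre_weight a w w'"
    and "lbmcf_solution n a w p q T f fx fxx ft"
  shows "\<exists>A B. \<forall>t. 0 \<le> t \<and> ereal t < T \<longrightarrow> \<bar>fx t 1\<bar> + \<bar>fx t a\<bar> \<le> A * exp (B * t)"
proof -
  obtain C where "0 \<le> C"
    and w: "\<And>y. y \<in> {1<..<a} \<Longrightarrow> 0 < w y \<and> w y \<le> C * (y - 1) \<and> w y \<le> C * (a - y)"
    using legendre_weight_le_linear[OF assms(4)] by blast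
  obtain K where "1 \<le> K" and "\<bar>p - q\<bar> \<le> K * (a - 1)"
    and initial: "\<And>y. y \<in> {1..a} \<Longrightarrow> \<bar>f 0 y - q\<bar> \<le> K * (y - 1) \<and> \<bar>f 0 y - p\<bar> \<le> K * (a - y)"
    using lbmcf_initial_barrier_constant[OF assms(5,2,3)] by blast
  have "1 \<le> n"
    using \<open>n \<ge> 2\<close> by simp
  have "\<bar>fx t 1\<bar> + \<bar>fx t a\<bar> \<le> 2 * K * exp ((2 * C * (real n - 1) + 1) * t)"
    if "0 \<le> t" "ereal t < T" for t
    using lbmcf_endpoint_slopes_le[OF assms(5) \<open>1 \<le> n\<close> \<open>a > 1\<close> \<open>0 \<le> C\<close> \<open>1 \<le> K\<close> w
        \<open>\<bar>p - q\<bar> \<le> K * (a - 1)\<close> initial that]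
    by linarith
  then show ?thesis
    by (intro exI[of _ "2 * K"] exI[of _ "2 * C * (real n - 1) + 1"]) simp
qed

end
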